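(* Let $X$ be as in the standing setting with skeleton $X_1,\dots,X_k$. Suppose $x,y\in X$ each lie in no $\operatorname{span}X_l$, and $x\in\operatorname{pos}\{x_i,x_j\}$, $y\in\operatorname{pos}\{y_{i'},y_{j'}\}$ with $x_i\in X_i$, $x_j\in X_j$, $y_{i'}\in X_{i'}$, $y_{j'}\in X_{j'}$, $i\ne j$, $i'\ne j'$. Then the index sets $\{i,j\}$ and $\{i',j'\}$ are either equal or disjoint.
   Context: Standing setting: $X\subset\mathbb R^n\setminus\{0\}$ is a finite set such that $0$ lies in the interior of $\operatorname{conv}X$, no element of $X$ is a positive multiple of another, and every $n+1$ points of $X$ are in good position. A finite set $A$ is in conical position if $0\notin\operatorname{conv}A$ and no point of $A$ lies in the positive hull (set of nonnegative linear combinations, denoted $\operatorname{pos}$) of the other points; it is in good position otherwise. A skeleton of $X$ is a collection of pairwise disjoint subsets $X_1,\dots,X_k\subseteq X$ such that each $X_i$ is the vertex set of a simplex whose relative interior contains $0$ and $\mathbb R^n=\operatorname{span}X_1\oplus\cdots\oplus\operatorname{span}X_k$. *)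

theory Defs
  imports "HOL-Analysis.Analysis"
begin

definition pos :: "'a::real_vector set \<Rightarrow> 'a set" where
  "pos A = {y. \<exists>c. (\<forall>a\<in>A. c a \<ge> 0) \<and> y = (\<Sum>a\<in>A. c a *\<^sub>R a)}"

definition conical_position :: "'a::real_vector set \<Rightarrow> bool" where
  "conical_position A \<longleftrightarrow> 0 \<notin> convex hull A \<and> (\<forall>a\<in>A. a \<notin> pos (A - {a}))"

definition good_position :: "'a::real_vector set \<Rightarrow> bool" where
  "good_position A \<longleftrightarrow> \<not> conical_position A"

definition standing_setting :: "'a::euclidean_space set \<Rightarrow> bool" where
  "standing_setting X \<longleftrightarrow>
     finite X \<and> 0 \<notin> X \<and> 0 \<in> interior (convex hull X) \<and>
     (\<forall>a\<in>X. \<forall>b\<in>X. a \<noteq> b \<longrightarrow> \<not> (\<exists>c>0. b = c *\<^sub>R a)) \<and>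
     (\<forall>A. A \<subseteq> X \<and> card A = DIM('a) + 1 \<longrightarrow> good_position A)"

definition direct_sum_UNIV :: "nat \<Rightarrow> (nat \<Rightarrow> 'a::real_vector set) \<Rightarrow> bool" where
  "direct_sum_UNIV k V \<longleftrightarrow>
     (\<forall>v. \<exists>u. (\<forall>l<k. u l \<in> V l) \<and> v = (\<Sum>l<k. u l)) \<and>
     (\<forall>u. (\<forall>l<k. u l \<in> V l) \<and> (\<Sum>l<k. u l) = 0 \<longrightarrow> (\<forall>l<k. u l = 0))"

definition skeleton :: "'a::euclidean_space set \<Rightarrow> nat \<Rightarrow> (nat \<Rightarrow> 'a set) \<Rightarrow> bool" where
  "skeleton X k Xs \<longleftrightarrow>
     (\<forall>l<k. Xs l \<subseteq> X) \<and>
     (\<forall>l<k. \<forall>m<k. l \<noteq> m \<longrightarrow> Xs l \<inter> Xs m = {}) \<and>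
     (\<forall>l<k. \<not> affine_dependent (Xs l) \<and> 0 \<in> rel_interior (convex hull (Xs l))) \<and>
     direct_sum_UNIV k (\<lambda>l. span (Xs l))"

end

theory Submission
  imports Defs
begin

(*
  Suppose the pairs share exactly one index. Then x = a u + b w and y = c u' + d w' with
  a, b, c, d > 0, u, u' in X_i, w in X_j, w' in X_m and i, j, m distinct. Expand y over an
  independent subset of X containing u and w': over {u, w'} if u = u', and otherwise over
  (X_i - {u'}) together with w', since u' is a negative combination of the other vertices of
  the simplex X_i (0 lies in its relative interior). Exchanging u for x = a u + b w turns this
  into an expansion of y over an independent subset of X in which x and w have coefficients of
  opposite signs and w' a positive one. Extend that subset to a basis B contained in X. The n+1
  points of B and y are in conical position: y is not in pos B because of its negative coordinate,
  0 is not in their convex hull because of a positive one, and no b in B lies in the positive hull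
  of the others because y has a second positive coordinate. This contradicts the assumption that
  every n+1 points of X are in good position.
*)

lemma subset_pos:
  assumes "finite A"
  shows "A \<subseteq> pos A"
proof
  fix a
  assume "a \<in> A"
  then have "a = (\<Sum>b\<in>A. (if b = a then 1 else 0) *\<^sub>R b)"
    using assms by (simp add: if_distrib[of "\<lambda>c. c *\<^sub>R _"] cong: if_cong)
  then show "a \<in> pos A"
    unfolding pos_def by (intro CollectI exI[of _ "\<lambda>b. if b = a then 1 else 0"]) simp
qed

lemma independent_coeffs_unique:
  fixes B :: "'a::real_vector set"
  assumes "independent B" "finite B" "(\<Sum>b\<in>B. f b *\<^sub>R b) = (\<Sum>b\<in>B. g b *\<^sub>R b)" "b \<in> B"
  shows "f b = g b"
proof -
  have "(\<Sum>b\<in>B. (f b - g b) *\<^sub>R b) = 0"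
    using assms(3) by (simp add: scaleR_diff_left sum_subtractf)
  then have "dependent B" if "f b \<noteq> g b"
    using dependent_finite[OF assms(2)] that assms(4) by (metis eq_iff_diff_eq_0)
  then show ?thesis
    using assms(1) by blast
qed

lemma independent_coeffs_scaleR:
  fixes B :: "'a::real_vector set"
  assumes "independent B" "finite B" "(\<Sum>b\<in>B. f b *\<^sub>R b) = s *\<^sub>R (\<Sum>b\<in>B. \<beta> b *\<^sub>R b)" "b \<in> B"
  shows "f b = s * \<beta> b"
  using independent_coeffs_unique[OF assms(1,2) _ assms(4), of f "\<lambda>b. s * \<beta> b"] assms(3)
  by (simp add: scaleR_sum_right)

lemma notin_pos_if_negative_coeff:
  fixes B :: "'a::real_vector set"
  assumes indep: "independent B" and fin: "finite B" and y: "y = (\<Sum>b\<in>B. \<beta> b *\<^sub>R b)"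
    and r: "r \<in> B" "\<beta> r < 0"
  shows "y \<notin> pos B"
proof
  assume "y \<in> pos B"
  then obtain c where c: "\<forall>b\<in>B. c b \<ge> 0" "(\<Sum>b\<in>B. c b *\<^sub>R b) = 1 *\<^sub>R y"
    unfolding pos_def by auto
  then have "c r = \<beta> r"
    using independent_coeffs_scaleR[OF indep fin _ r(1), of c 1 \<beta>] y by simp
  then show False
    using c(1) r by fastforce
qed

lemma zero_notin_convex_hull_insert_if_positive_coeff:
  fixes B :: "'a::real_vector set"
  assumes indep: "independent B" and fin: "finite B" and y: "y = (\<Sum>b\<in>B. \<beta> b *\<^sub>R b)"
    and yB: "y \<notin> B" and p: "p \<in> B" "\<beta> p > 0"
  shows "0 \<notin> convex hull (insert y B)"
proof
  assume "0 \<in> convex hull (insert y B)"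
  then obtain u where u: "\<forall>a\<in>insert y B. 0 \<le> u a" "sum u (insert y B) = 1"
    "(\<Sum>a\<in>insert y B. u a *\<^sub>R a) = 0"
    using convex_hull_finite[of "insert y B"] fin by auto
  have "(\<Sum>b\<in>B. u b *\<^sub>R b) = (- u y) *\<^sub>R y"
    using u(3) fin yB by (simp add: add_eq_0_iff2)
  then have uB: "u b = - u y * \<beta> b" if "b \<in> B" for b
    using independent_coeffs_scaleR[OF indep fin _ that, of u "- u y" \<beta>] y by simp
  have "u p \<ge> 0" "u y \<ge> 0"
    using u(1) p(1) by auto
  then have "u y = 0"
    using uB[OF p(1)] mult_pos_pos[of "u y" "\<beta> p"] p(2) by linarith
  then have "sum u (insert y B) = 0"
    using uB fin yB by simp
  then show False
    using u(2) by simp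
qed

lemma notin_pos_insert_Diff_if_two_positive_coeffs:
  fixes B :: "'a::real_vector set"
  assumes indep: "independent B" and fin: "finite B" and y: "y = (\<Sum>b\<in>B. \<beta> b *\<^sub>R b)"
    and yB: "y \<notin> B" and pq: "p \<in> B" "q \<in> B" "p \<noteq> q" "\<beta> p > 0" "\<beta> q > 0" and a: "a \<in> B"
  shows "a \<notin> pos (insert y B - {a})"
proof
  assume "a \<in> pos (insert y B - {a})"
  moreover have "insert y B - {a} = insert y (B - {a})"
    using a yB by auto
  ultimately obtain c where c: "\<forall>t\<in>insert y (B - {a}). c t \<ge> 0"
    "a = c y *\<^sub>R y + (\<Sum>b\<in>B - {a}. c b *\<^sub>R b)"
    unfolding pos_def using fin yB by auto
  then have "(\<Sum>b\<in>B. (if b = a then 1 else - c b) *\<^sub>R b) = c y *\<^sub>R y"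
    using fin a
    by (simp add: sum.remove[of B a] diff_eq_eq if_distrib[of "\<lambda>c. c *\<^sub>R _"] sum_negf cong: if_cong)
  then have ca: "(if b = a then 1 else - c b) = c y * \<beta> b" if "b \<in> B" for b
    using independent_coeffs_scaleR[OF indep fin _ that, of _ "c y" \<beta>] y by simp
  obtain e where e: "e \<in> B" "e \<noteq> a" "\<beta> e > 0"
    using pq by metis
  have "c y \<ge> 0" "c e \<ge> 0"
    using c(1) e(1,2) by auto
  moreover have "- c e = c y * \<beta> e"
    using ca[OF e(1)] e(2) by simp
  ultimately have "c y = 0"
    using e(3) mult_pos_pos[of "c y" "\<beta> e"] by linarith
  then show False
    using ca[OF a] by simp
qed

lemma conical_position_insert_mixed_signs:
  fixes B :: "'a::real_vector set"
  assumes indep: "independent B" and fin: "finite B" and y: "y = (\<Sum>b\<in>B. \<beta> b *\<^sub>R b)"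
    and pq: "p \<in> B" "q \<in> B" "p \<noteq> q" "\<beta> p > 0" "\<beta> q > 0" and r: "r \<in> B" "\<beta> r < 0"
  shows "y \<notin> B" and "conical_position (insert y B)"
proof -
  have y_pos: "y \<notin> pos B"
    using notin_pos_if_negative_coeff[OF indep fin y r] .
  then show yB: "y \<notin> B"
    using subset_pos[OF fin] by blast
  show "conical_position (insert y B)"
    unfolding conical_position_def
    using zero_notin_convex_hull_insert_if_positive_coeff[OF indep fin y yB pq(1,4)]
      notin_pos_insert_Diff_if_two_positive_coeffs[OF indep fin y yB pq] y_pos yB by auto
qed

lemma pos_doubleton_coeffs_pos:
  fixes x p q :: "'a::real_vector"
  assumes "x \<in> pos {p, q}" "p \<in> P" "q \<in> Q" "x \<notin> span P" "x \<notin> span Q"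
  shows "\<exists>a b. a > 0 \<and> b > 0 \<and> x = a *\<^sub>R p + b *\<^sub>R q"
proof -
  have "p \<noteq> q"
    using assms(1-4) unfolding pos_def by (force simp: span_base span_scale)
  then obtain c where c: "c p \<ge> 0" "c q \<ge> 0" "x = c p *\<^sub>R p + c q *\<^sub>R q"
    using assms(1) unfolding pos_def by auto
  moreover have "c p \<noteq> 0" "c q \<noteq> 0"
    using c(3) assms(2-5) by (auto simp: span_base span_scale)
  ultimately show ?thesis
    by (intro exI[of _ "c p"] exI[of _ "c q"]) auto
qed

lemma independent_exchange:
  fixes T :: "'a::real_vector set"
  assumes indep: "independent (insert w T)" and wT: "w \<notin> T" and u: "u \<in> T" and "a \<noteq> 0"
    and x: "x = a *\<^sub>R u + b *\<^sub>R w"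
  shows "x \<notin> insert w (T - {u})" and "independent (insert x (insert w (T - {u})))"
proof -
  let ?T = "insert w (T - {u})"
  have "x \<notin> span ?T"
  proof
    assume "x \<in> span ?T"
    then have "a *\<^sub>R u \<in> span ?T"
      unfolding x by (simp add: span_add_eq2 span_base span_scale)
    then have "u \<in> span ?T"
      using span_scale[of "a *\<^sub>R u" ?T "1 / a"] \<open>a \<noteq> 0\<close> by simp
    moreover have "?T = insert w T - {u}"
      using wT u by auto
    ultimately show False
      using indep u unfolding dependent_def by auto
  qed
  moreover have "independent ?T"
    by (rule independent_mono[OF indep]) blast
  ultimately show "independent (insert x ?T)"
    by (rule independent_insertI)
  show "x \<notin> ?T"
    using \<open>x \<notin> span ?T\<close> span_base[of x ?T] by blast
qed

lemma sum_scaleR_exchange: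
  fixes T :: "'a::real_vector set"
  assumes "finite T" "u \<in> T" "w \<notin> T" "x \<notin> insert w (T - {u})" "a \<noteq> 0"
    and x: "x = a *\<^sub>R u + b *\<^sub>R w"
  shows "(\<Sum>t\<in>T. \<beta> t *\<^sub>R t) =
    (\<Sum>t\<in>insert x (insert w (T - {u})). (\<beta>(x := \<beta> u / a, w := - (\<beta> u * b / a))) t *\<^sub>R t)"
    (is "_ = (\<Sum>t\<in>_. ?\<beta>' t *\<^sub>R t)")
proof -
  have "?\<beta>' x = \<beta> u / a" "?\<beta>' w = - (\<beta> u * b / a)"
    using assms(4) by auto
  moreover have "(\<beta> u / a) *\<^sub>R x + (- (\<beta> u * b / a)) *\<^sub>R w = \<beta> u *\<^sub>R u"
    unfolding x using \<open>a \<noteq> 0\<close> by (simp add: algebra_simps)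
  ultimately have "\<beta> u *\<^sub>R u = ?\<beta>' x *\<^sub>R x + ?\<beta>' w *\<^sub>R w"
    by simp
  moreover have "(\<Sum>t\<in>T - {u}. \<beta> t *\<^sub>R t) = (\<Sum>t\<in>T - {u}. ?\<beta>' t *\<^sub>R t)"
    using assms(3,4) by (intro sum.cong) auto
  ultimately show ?thesis
    using assms by (simp add: sum.remove[of T u] add.assoc)
qed

lemma vertex_eq_neg_combination:
  fixes T :: "'a::euclidean_space set"
  assumes na: "\<not> affine_dependent T" and ri: "0 \<in> rel_interior (convex hull T)" and v: "v \<in> T"
  obtains \<gamma> where "\<forall>t\<in>T - {v}. \<gamma> t > 0" "v = (\<Sum>t\<in>T - {v}. (- \<gamma> t) *\<^sub>R t)"
proof -
  obtain \<alpha> where weights: "\<forall>t\<in>T. 0 < \<alpha> t" "(\<Sum>t\<in>T. \<alpha> t *\<^sub>R t) = 0"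
    using ri rel_interior_convex_hull_explicit[OF na] by auto
  have "\<alpha> v > 0"
    using weights(1) v by blast
  have "\<alpha> v *\<^sub>R v = - (\<Sum>t\<in>T - {v}. \<alpha> t *\<^sub>R t)"
    using weights(2) sum.remove[OF aff_independent_finite[OF na] v, of "\<lambda>t. \<alpha> t *\<^sub>R t"]
    by (simp add: eq_neg_iff_add_eq_0)
  then have "(1 / \<alpha> v) *\<^sub>R (\<alpha> v *\<^sub>R v) = (\<Sum>t\<in>T - {v}. (- (\<alpha> t / \<alpha> v)) *\<^sub>R t)"
    by (simp add: scaleR_sum_right sum_negf)
  then have "v = (\<Sum>t\<in>T - {v}. (- (\<alpha> t / \<alpha> v)) *\<^sub>R t)"
    using \<open>\<alpha> v > 0\<close> by simp
  moreover have "\<forall>t\<in>T - {v}. \<alpha> t / \<alpha> v > 0"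
    using weights(1) \<open>\<alpha> v > 0\<close> by simp
  ultimately show thesis
    using that[of "\<lambda>t. \<alpha> t / \<alpha> v"] by blast
qed

lemma independent_Diff_vertex:
  fixes T :: "'a::euclidean_space set"
  assumes na: "\<not> affine_dependent T" and ri: "0 \<in> rel_interior (convex hull T)" and v: "v \<in> T"
  shows "independent (T - {v})"
proof -
  have fin: "finite T"
    using aff_independent_finite[OF na] .
  have "0 \<in> affine hull T"
    using ri rel_interior_subset convex_hull_subset_affine_hull by blast
  then have "aff_dim T = aff_dim (span T)"
    by (metis aff_dim_affine_hull affine_hull_span_0)
  also have "\<dots> = int (dim T)"
    by (simp add: aff_dim_subspace)
  finally have "dim (span T) = card (T - {v})"
    using aff_dim_affine_independent[OF na] fin v by simp
  moreover obtain \<gamma> where \<gamma>: "v = (\<Sum>t\<in>T - {v}. (- \<gamma> t) *\<^sub>R t)"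
    using vertex_eq_neg_combination[OF na ri v] by blast
  have "(\<Sum>t\<in>T - {v}. (- \<gamma> t) *\<^sub>R t) \<in> span (T - {v})"
    by (intro span_sum span_scale span_base)
  then have "v \<in> span (T - {v})"
    by (simp only: \<gamma>[symmetric])
  then have "span T \<subseteq> span (T - {v})"
    using v by (metis insert_Diff span_redundant order_refl)
  ultimately show ?thesis
    using card_eq_dim[of "T - {v}" "span T"] fin span_superset[of T] by auto
qed

lemma direct_sum_UNIV_sum_eq_0D:
  assumes ds: "direct_sum_UNIV k V" and V0: "\<forall>l<k. 0 \<in> V l"
    and I: "I \<subseteq> {..<k}" "\<forall>l\<in>I. u l \<in> V l" "sum u I = 0" and l: "l \<in> I"
  shows "u l = 0"
proof -
  define v where "v l = (if l \<in> I then u l else 0)" for l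
  have "\<forall>l<k. v l \<in> V l"
    using V0 I(2) by (simp add: v_def)
  moreover have "sum v {..<k} = 0"
    unfolding v_def using I(1,3) by (simp add: sum.If_cases Int_absorb1)
  ultimately have "\<forall>l<k. v l = 0"
    using ds unfolding direct_sum_UNIV_def by blast
  then show ?thesis
    using I(1) l unfolding v_def by auto
qed

lemma span_eq_UNIV_if_standing_setting:
  assumes "standing_setting X"
  shows "span X = UNIV"
proof -
  have "0 \<in> interior (convex hull X)"
    using assms by (simp add: standing_setting_def)
  then have "affine hull (convex hull X) = UNIV"
    using affine_hull_nonempty_interior by blast
  then show ?thesis
    using affine_hull_subset_span[of X] by (simp add: affine_hull_convex_hull top_unique)
qed

lemma standing_setting_no_mixed_sign_expansion:
  fixes X :: "'a::euclidean_space set"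
  assumes st: "standing_setting X" and S: "S \<subseteq> X" "independent S" and yX: "y \<in> X"
    and y: "y = (\<Sum>s\<in>S. \<beta> s *\<^sub>R s)"
    and pq: "p \<in> S" "q \<in> S" "p \<noteq> q" "\<beta> p > 0" "\<beta> q > 0" and r: "r \<in> S" "\<beta> r < 0"
  shows False
proof -
  obtain B where B: "S \<subseteq> B" "B \<subseteq> X" "independent B" "X \<subseteq> span B"
    using maximal_independent_subset_extend[OF S] by metis
  have finB: "finite B"
    using B(2) st finite_subset by (auto simp: standing_setting_def)
  have "span B = UNIV"
    using B(4) span_eq_UNIV_if_standing_setting[OF st] by (metis span_minimal subspace_span top_unique)
  then have cardB: "card B = DIM('a)"
    using dim_span_eq_card_independent[OF B(3)] by simp
  define \<beta>' where "\<beta>' b = (if b \<in> S then \<beta> b else 0)" for b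
  have "y = (\<Sum>b\<in>B. \<beta>' b *\<^sub>R b)"
    unfolding y \<beta>'_def by (rule sum.mono_neutral_cong_left[OF finB B(1)]) auto
  note conical = conical_position_insert_mixed_signs[OF B(3) finB this, of p q r]
  have yB: "y \<notin> B" and "conical_position (insert y B)"
    using conical pq r B(1) by (auto simp: \<beta>'_def)
  moreover have "good_position (insert y B)"
    using st yX B(2) yB finB cardB by (simp add: standing_setting_def)
  ultimately show False
    unfolding good_position_def by blast
qed

lemma standing_setting_exchange_False:
  fixes X :: "'a::euclidean_space set"
  assumes st: "standing_setting X" and T: "T \<subseteq> X" "independent (insert w T)" "w \<in> X" "w \<notin> T"
    and u: "u \<in> T" "\<beta> u \<noteq> 0" and w': "w' \<in> T" "w' \<noteq> u" "\<beta> w' > 0"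
    and x: "x = a *\<^sub>R u + b *\<^sub>R w" "a > 0" "b > 0" "x \<in> X"
    and y: "y \<in> X" "y = (\<Sum>t\<in>T. \<beta> t *\<^sub>R t)"
  shows False
proof -
  let ?S = "insert x (insert w (T - {u}))"
  define \<beta>' where "\<beta>' = \<beta>(x := \<beta> u / a, w := - (\<beta> u * b / a))"
  have fin: "finite T"
    using T(1) st finite_subset by (auto simp: standing_setting_def)
  have xS: "x \<notin> insert w (T - {u})" and indep: "independent ?S"
    using independent_exchange[OF T(2,4) u(1) _ x(1)] x(2) by simp_all
  have SX: "?S \<subseteq> X"
    using T(1,3) x(4) by auto
  have y_S: "y = (\<Sum>t\<in>?S. \<beta>' t *\<^sub>R t)"
    unfolding y(2) \<beta>'_def using sum_scaleR_exchange[OF fin u(1) T(4) xS _ x(1)] x(2) by simp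
  have members: "x \<in> ?S" "w \<in> ?S" "w' \<in> ?S" "x \<noteq> w'" "w \<noteq> w'"
    using xS w' T(4) by auto
  have "\<beta>' w' > 0"
    using xS w' T(4) by (auto simp: \<beta>'_def)
  have signs: "\<beta>' x = \<beta> u / a" "\<beta>' w = - (\<beta> u * b / a)"
    using xS by (auto simp: \<beta>'_def)
  have "\<beta>' x > 0 \<and> \<beta>' w < 0 \<or> \<beta>' w > 0 \<and> \<beta>' x < 0"
  proof (cases "\<beta> u > 0")
    case True
    then show ?thesis
      using signs x(2,3) by simp
  next
    case False
    then have "\<beta> u < 0"
      using u(2) by simp
    then show ?thesis
      using signs x(2,3) by (simp add: divide_neg_pos mult_neg_pos)
  qed
  then show False
    using standing_setting_no_mixed_sign_expansion[OF st SX indep y(1) y_S] members \<open>\<beta>' w' > 0\<close>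
    by blast
qed

lemma skeletonD:
  assumes "skeleton X k Xs" "l < k"
  shows "Xs l \<subseteq> X" "\<not> affine_dependent (Xs l)" "0 \<in> rel_interior (convex hull (Xs l))"
  using assms by (simp_all add: skeleton_def)

lemma skeleton_disjoint:
  assumes "skeleton X k Xs" "l < k" "l' < k" "l \<noteq> l'"
  shows "Xs l \<inter> Xs l' = {}"
  using assms by (simp add: skeleton_def)

lemma skeleton_independent_insert_insert:
  fixes Xs :: "nat \<Rightarrow> 'a::euclidean_space set"
  assumes sk: "skeleton X k Xs" and idx: "i < k" "j < k" "m < k" "i \<noteq> j" "i \<noteq> m" "j \<noteq> m"
    and P: "P \<subseteq> span (Xs i)" "independent P"
    and w: "w \<in> span (Xs j)" "w \<noteq> 0" and w': "w' \<in> span (Xs m)" "w' \<noteq> 0"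
  shows "independent (insert w (insert w' P))"
proof -
  have components_eq_0: "vi = 0 \<and> vj = 0 \<and> vm = 0"
    if "vi \<in> span (Xs i)" "vj \<in> span (Xs j)" "vm \<in> span (Xs m)" "vi + vj + vm = 0" for vi vj vm
  proof -
    define v where "v l = (if l = i then vi else if l = j then vj else vm)" for l
    have ds: "direct_sum_UNIV k (\<lambda>l. span (Xs l))"
      using sk by (simp add: skeleton_def)
    have "\<forall>l\<in>{i, j, m}. v l \<in> span (Xs l)" "sum v {i, j, m} = 0"
      using that idx by (auto simp: v_def add.assoc)
    then have "v l = 0" if "l \<in> {i, j, m}" for l
      using direct_sum_UNIV_sum_eq_0D[OF ds _ _ _ _ that] idx by (simp add: span_zero)
    then show ?thesis
      using idx by (metis insertCI v_def)
  qed
  have spanP: "span P \<subseteq> span (Xs i)"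
    using P(1) by (simp add: span_minimal)
  have "w' \<notin> span P"
  proof
    assume "w' \<in> span P"
    then have "- w' \<in> span (Xs i)"
      using spanP span_neg by blast
    then show False
      using components_eq_0[of "- w'" 0 w'] w' by (simp add: span_zero)
  qed
  moreover have "w \<notin> span (insert w' P)"
  proof
    assume "w \<in> span (insert w' P)"
    then obtain t where "w - t *\<^sub>R w' \<in> span P"
      using span_breakdown_eq by blast
    then have "t *\<^sub>R w' - w \<in> span (Xs i)"
      using spanP span_neg by fastforce
    then show False
      using components_eq_0[of "t *\<^sub>R w' - w" w "- (t *\<^sub>R w')"] w span_neg[OF span_scale[OF w'(1)]] by simp
  qed
  ultimately show ?thesis
    using P(2) by (simp add: independent_insertI)
qed

lemma skeleton_exchange_False:
  fixes X :: "'a::euclidean_space set" and Xs :: "nat \<Rightarrow> 'a set"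
  assumes st: "standing_setting X" and sk: "skeleton X k Xs"
    and idx: "i < k" "j < k" "m < k" "i \<noteq> j" "i \<noteq> m" "j \<noteq> m"
    and mem: "w \<in> Xs j" "w' \<in> Xs m"
    and Q: "Q \<subseteq> Xs i" "independent Q" "u \<in> Q" "f u \<noteq> 0" and "d > 0"
    and x: "x = a *\<^sub>R u + b *\<^sub>R w" "a > 0" "b > 0" "x \<in> X"
    and y: "y \<in> X" "y = (\<Sum>t\<in>insert w' Q. (f(w' := d)) t *\<^sub>R t)"
  shows False
proof (rule standing_setting_exchange_False[OF st _ _ _ _ _ _ _ _ _ x y])
  have XsX: "Xs i \<subseteq> X" and wX: "w \<in> X" "w' \<in> X"
    using skeletonD(1)[OF sk] idx mem by blast+
  have apart: "w \<notin> Xs i" "w' \<notin> Xs i" "w \<noteq> w'"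
    using skeleton_disjoint[OF sk] idx mem by blast+
  have "0 \<notin> X"
    using st by (simp add: standing_setting_def)
  then have nz: "w \<noteq> 0" "w' \<noteq> 0"
    using wX by blast+
  show "independent (insert w (insert w' Q))"
  proof (rule skeleton_independent_insert_insert[OF sk idx _ Q(2)])
    show "Q \<subseteq> span (Xs i)"
      using Q(1) span_superset by blast
  qed (use mem nz span_base in auto)
  show "w' \<noteq> u"
    using apart(2) Q(1,3) by blast
  then show "(f(w' := d)) u \<noteq> 0" "(f(w' := d)) w' > 0"
    using Q(4) \<open>d > 0\<close> by auto
  show "insert w' Q \<subseteq> X" "w \<in> X" "w \<notin> insert w' Q" "u \<in> insert w' Q" "w' \<in> insert w' Q"
    using Q(1,3) XsX wX apart by auto
qed

lemma skeleton_pairs_sharing_one_index_False: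
  fixes X :: "'a::euclidean_space set" and Xs :: "nat \<Rightarrow> 'a set"
  assumes st: "standing_setting X" and sk: "skeleton X k Xs" and xy: "x \<in> X" "y \<in> X"
    and x_span: "\<forall>l<k. x \<notin> span (Xs l)" and y_span: "\<forall>l<k. y \<notin> span (Xs l)"
    and idx: "i < k" "j < k" "m < k" "i \<noteq> j" "i \<noteq> m" "j \<noteq> m"
    and mem: "u \<in> Xs i" "u' \<in> Xs i" "w \<in> Xs j" "w' \<in> Xs m"
    and x: "x \<in> pos {u, w}" and y: "y \<in> pos {u', w'}"
  shows False
proof -
  obtain a b where ab: "x = a *\<^sub>R u + b *\<^sub>R w" "a > 0" "b > 0"
    using pos_doubleton_coeffs_pos[OF x mem(1,3)] x_span idx by blast
  obtain c d where cd: "y = c *\<^sub>R u' + d *\<^sub>R w'" "c > 0" "d > 0"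
    using pos_doubleton_coeffs_pos[OF y mem(2,4)] y_span idx by blast
  note exchange = skeleton_exchange_False[OF st sk idx mem(3,4) _ _ _ _ cd(3) ab xy]
  have "w' \<notin> Xs i"
    using skeleton_disjoint[OF sk idx(1,3,5)] mem(4) by blast
  show False
  proof (cases "u = u'")
    case True
    have "0 \<notin> X"
      using st by (simp add: standing_setting_def)
    then have indep_u: "independent {u}"
      using skeletonD(1)[OF sk idx(1)] mem(1) by (auto simp: independent_insertI)
    have "w' \<noteq> u"
      using mem(1) \<open>w' \<notin> Xs i\<close> by blast
    then have y_u: "y = (\<Sum>t\<in>insert w' {u}. ((\<lambda>_. c)(w' := d)) t *\<^sub>R t)"
      using cd(1) True by (simp add: add.commute)
    show False
      by (rule exchange[OF _ indep_u _ _ y_u]) (use mem(1) cd(2) in auto)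
  next
    case False
    let ?Q = "Xs i - {u'}"
    note na = skeletonD(2)[OF sk idx(1)] and ri = skeletonD(3)[OF sk idx(1)]
    obtain \<gamma> where \<gamma>: "\<forall>t\<in>?Q. \<gamma> t > 0" "u' = (\<Sum>t\<in>?Q. (- \<gamma> t) *\<^sub>R t)"
      using vertex_eq_neg_combination[OF na ri mem(2)] by blast
    from \<gamma>(2) have "c *\<^sub>R u' = c *\<^sub>R (\<Sum>t\<in>?Q. (- \<gamma> t) *\<^sub>R t)"
      by (rule arg_cong)
    also have "\<dots> = (\<Sum>t\<in>?Q. (- (c * \<gamma> t)) *\<^sub>R t)"
      by (simp add: scaleR_sum_right)
    also have "\<dots> = (\<Sum>t\<in>?Q. ((\<lambda>t. - (c * \<gamma> t))(w' := d)) t *\<^sub>R t)"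
      using \<open>w' \<notin> Xs i\<close> by (intro sum.cong) auto
    finally have y_Q: "y = (\<Sum>t\<in>insert w' ?Q. ((\<lambda>t. - (c * \<gamma> t))(w' := d)) t *\<^sub>R t)"
      using cd(1) \<open>w' \<notin> Xs i\<close> aff_independent_finite[OF na] by (simp add: add.commute)
    have "\<gamma> u > 0"
      using \<gamma>(1) False mem(1) by blast
    show False
      by (rule exchange[OF _ independent_Diff_vertex[OF na ri mem(2)] _ _ y_Q])
        (use False mem(1) \<open>\<gamma> u > 0\<close> cd(2) in auto)
  qed
qed

theorem proposition5p2:
  fixes X :: "'a::euclidean_space set" and Xs :: "nat \<Rightarrow> 'a set" and k :: nat
    and x y xi xj yi yj :: 'a and i j i' j' :: nat
  assumes "standing_setting X"
    and "skeleton X k Xs"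
    and "x \<in> X" and "y \<in> X"
    and "\<forall>l<k. x \<notin> span (Xs l)" and "\<forall>l<k. y \<notin> span (Xs l)"
    and "i < k" "j < k" "i' < k" "j' < k" "i \<noteq> j" "i' \<noteq> j'"
    and "xi \<in> Xs i" "xj \<in> Xs j" "yi \<in> Xs i'" "yj \<in> Xs j'"
    and "x \<in> pos {xi, xj}" and "y \<in> pos {yi, yj}"
  shows "{i, j} = {i', j'} \<or> {i, j} \<inter> {i', j'} = {}"
proof (rule ccontr)
  note shared = skeleton_pairs_sharing_one_index_False[OF assms(1-6)]
  assume "\<not> ?thesis"
  then consider "i = i'" "j \<noteq> j'" | "i = j'" "j \<noteq> i'" | "j = i'" "i \<noteq> j'" | "j = j'" "i \<noteq> i'"
    using assms(11,12) by blast
  then show False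
  proof cases
    case 1
    then show False
      by (intro shared[of i j j' xi yi xj yj]) (use assms in auto)
  next
    case 2
    then show False
      by (intro shared[of i j i' xi yj xj yi]) (use assms in \<open>auto simp: insert_commute\<close>)
  next
    case 3
    then show False
      by (intro shared[of j i j' xj yi xi yj]) (use assms in \<open>auto simp: insert_commute\<close>)
  next
    case 4
    then show False
      by (intro shared[of j i i' xj yj xi yi]) (use assms in \<open>auto simp: insert_commute\<close>)
  qed
qed

end
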